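(* There is a function $C(t,\epsilon)$ such that the following holds for every positive integer $t$ and every $\epsilon\in(0,1)$: let $G$ be a connected balanced bipartite graph with parts $X,Y$ each of order $n$, with $\delta(G)\geq 3C(t,\epsilon)$ and with no induced $S_{t,t}$. Then for any vertices $x,x'\in X\setminus U_X(\epsilon)$ we have $|N(x)\cap N(x')|\geq (1-10\epsilon)\Delta_X$.
   Context: For positive integers $a,b$, the biclaw $S_{a,b}$ is the graph with vertex set $\{x,x_1,\dots,x_a,y,y_1,\dots,y_b\}$ and edges $xy$, $xy_1,\dots,xy_b$, $yx_1,\dots,yx_a$; "no induced $S_{t,t}$" means no induced subgraph isomorphic to $S_{t,t}$. For a bipartite graph with parts $X,Y$, $\Delta_X=\max_{x\in X} d(x)$ and $U_X(\epsilon)=\{x\in X: d(x)\leq (1-\epsilon)\Delta_X\}$. $N(v)$ is the neighbourhood and $\delta(G)$ the minimum degree. *)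

theory Defs
  imports Complex_Main
begin

text \<open>A simple graph is given by a vertex set V and a symmetric irreflexive
edge relation E. A bipartite graph with parts X, Y has V = X \<union> Y.\<close>

definition bipartite_graph :: "'a set \<Rightarrow> 'a set \<Rightarrow> ('a \<Rightarrow> 'a \<Rightarrow> bool) \<Rightarrow> bool" where
  "bipartite_graph X Y E \<longleftrightarrow> finite X \<and> finite Y \<and> X \<inter> Y = {} \<and>
     (\<forall>u v. E u v \<longrightarrow> E v u) \<and>
     (\<forall>u v. E u v \<longrightarrow> (u \<in> X \<and> v \<in> Y) \<or> (u \<in> Y \<and> v \<in> X))"

definition nbhd :: "'a set \<Rightarrow> ('a \<Rightarrow> 'a \<Rightarrow> bool) \<Rightarrow> 'a \<Rightarrow> 'a set" where
  "nbhd V E v = {u \<in> V. E v u}"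

definition degree :: "'a set \<Rightarrow> ('a \<Rightarrow> 'a \<Rightarrow> bool) \<Rightarrow> 'a \<Rightarrow> nat" where
  "degree V E v = card (nbhd V E v)"

definition min_degree :: "'a set \<Rightarrow> ('a \<Rightarrow> 'a \<Rightarrow> bool) \<Rightarrow> nat" where
  "min_degree V E = Min (degree V E ` V)"

definition max_degree_on :: "'a set \<Rightarrow> ('a \<Rightarrow> 'a \<Rightarrow> bool) \<Rightarrow> 'a set \<Rightarrow> nat" where
  "max_degree_on V E X = Max (degree V E ` X)"

definition U_set :: "'a set \<Rightarrow> ('a \<Rightarrow> 'a \<Rightarrow> bool) \<Rightarrow> 'a set \<Rightarrow> real \<Rightarrow> 'a set" where
  "U_set V E X \<epsilon> = {x \<in> X. real (degree V E x) \<le> (1 - \<epsilon>) * real (max_degree_on V E X)}"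

definition connected_graph :: "'a set \<Rightarrow> ('a \<Rightarrow> 'a \<Rightarrow> bool) \<Rightarrow> bool" where
  "connected_graph V E \<longleftrightarrow>
     (\<forall>u\<in>V. \<forall>v\<in>V. (\<lambda>a b. a \<in> V \<and> b \<in> V \<and> E a b)\<^sup>*\<^sup>* u v)"

text \<open>Vertices of the biclaw S_{a,b}: x, y, x_1..x_a, y_1..y_b (indices 0-based).\<close>
datatype bcv = BX | BY | BXi nat | BYi nat

definition biclaw_verts :: "nat \<Rightarrow> nat \<Rightarrow> bcv set" where
  "biclaw_verts a b = {BX, BY} \<union> BXi ` {..<a} \<union> BYi ` {..<b}"

fun biclaw_edge :: "bcv \<Rightarrow> bcv \<Rightarrow> bool" where
  "biclaw_edge BX BY = True"
| "biclaw_edge BY BX = True"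
| "biclaw_edge BX (BYi _) = True"
| "biclaw_edge (BYi _) BX = True"
| "biclaw_edge BY (BXi _) = True"
| "biclaw_edge (BXi _) BY = True"
| "biclaw_edge _ _ = False"

definition has_induced_biclaw :: "'a set \<Rightarrow> ('a \<Rightarrow> 'a \<Rightarrow> bool) \<Rightarrow> nat \<Rightarrow> nat \<Rightarrow> bool" where
  "has_induced_biclaw V E a b \<longleftrightarrow>
     (\<exists>f. inj_on f (biclaw_verts a b) \<and> f ` biclaw_verts a b \<subseteq> V \<and>
        (\<forall>u\<in>biclaw_verts a b. \<forall>v\<in>biclaw_verts a b. E (f u) (f v) \<longleftrightarrow> biclaw_edge u v))"

end

theory Submission
  imports Defs
begin

text \<open>Fix \<open>z \<in> X\<close> of maximum degree \<open>D\<close> and layer the vertices by their distance from \<open>z\<close>.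
  Say that \<open>w\<close> covers \<open>u\<close> if \<open>w\<close> is adjacent to all but fewer than \<open>deg u / r\<close> neighbours of \<open>u\<close>.
  For an edge \<open>u y\<close>, all but fewer than \<open>K = t (4 r)\<^sup>t\<close> neighbours of \<open>y\<close> cover \<open>u\<close>: otherwise
  a greedy selection yields \<open>t\<close> of them and \<open>t\<close> neighbours of \<open>u\<close> with no edges in between,
  which together with \<open>u y\<close> span an induced \<open>S\<^sub>t\<^sub>,\<^sub>t\<close>. Hence two vertices with a common
  neighbour have a common cover, so their neighbourhoods agree up to covering errors.
  The same obstruction between consecutive distance layers forces every vertex at distance at
  least 3 from \<open>z\<close> to have at least \<open>K\<close> neighbours one layer closer to \<open>z\<close>; together with
  covering this excludes vertices of degree close to \<open>D\<close> at distance more than 2. So every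
  \<open>x \<in> X\<close> with \<open>deg x > (1 - \<epsilon>) D\<close> shares a neighbour with \<open>z\<close> and misses fewer than
  \<open>2 D / r\<close> neighbours of \<open>z\<close>, and two such vertices have more than \<open>(1 - 6 \<epsilon>) D\<close> common
  neighbours.\<close>

section \<open>Counting\<close>

lemma exists_popular_partner:
  fixes R :: "'a \<Rightarrow> 'b \<Rightarrow> bool"
  assumes "finite W" "finite Q" "Q \<noteq> {}"
    and partners: "\<And>w. w \<in> W \<Longrightarrow> m \<le> card {y\<in>Q. R w y}"
  shows "\<exists>y\<in>Q. card W * m \<le> card Q * card {w\<in>W. R w y}"
proof -
  define popularity where "popularity y = card {w\<in>W. R w y}" for y
  obtain y where y: "y \<in> Q" "popularity y = Max (popularity ` Q)"
  proof -
    have "Max (popularity ` Q) \<in> popularity ` Q" using assms(2,3) by simp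
    then show ?thesis using that by fastforce
  qed
  have "card W * m \<le> (\<Sum>w\<in>W. card {y\<in>Q. R w y})"
    using sum_bounded_below[of W m] partners by simp
  also have "\<dots> = (\<Sum>y\<in>Q. popularity y)"
    using sum.swap_restrict[OF assms(1,2), of "\<lambda>_ _. 1::nat" R] by (simp add: popularity_def)
  also have "\<dots> \<le> card Q * popularity y"
    using sum_bounded_above[of Q popularity] y assms(2) by simp
  finally show ?thesis
    using y(1) unfolding popularity_def by blast
qed

text \<open>The greedy step picks the partner shared by the largest part of the surviving set;
  as long as \<open>2 * k \<le> m\<close>, every surviving element still has at least \<open>m / 2\<close> partners
  outside the chosen ones.\<close>
lemma greedy_common_partners:
  fixes R :: "'a \<Rightarrow> 'b \<Rightarrow> bool"
  assumes W: "finite W" "W \<noteq> {}" and Q: "finite Q" "card Q \<le> q"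
    and partners: "\<And>w. w \<in> W \<Longrightarrow> m \<le> card {y\<in>Q. R w y}"
    and "2 * k \<le> m"
  shows "\<exists>T W'. T \<subseteq> Q \<and> card T = k \<and> W' \<subseteq> W \<and> (\<forall>w\<in>W'. \<forall>y\<in>T. R w y) \<and>
           card W * m ^ k \<le> card W' * (2 * q) ^ k"
  using \<open>2 * k \<le> m\<close>
proof (induction k)
  case 0
  show ?case by (intro exI[of _ "{}"] exI[of _ W]) simp
next
  case (Suc k)
  have "2 * k \<le> m" and k_less: "k < m - k"
    using Suc.prems by simp_all
  then obtain T W' where T: "T \<subseteq> Q" "card T = k" and W': "W' \<subseteq> W" "\<forall>w\<in>W'. \<forall>y\<in>T. R w y"
    and bound: "card W * m ^ k \<le> card W' * (2 * q) ^ k"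
    using Suc.IH by blast
  have "0 < card W" "0 < m"
    using W k_less by (auto simp: card_gt_0_iff)
  then have "0 < card W * m ^ k"
    by simp
  then obtain w where "w \<in> W'"
    using bound by fastforce
  have fin: "finite W'" "finite (Q - T)" "finite T"
    using W' W Q T finite_subset by blast+
  have remaining: "m - k \<le> card {y\<in>Q - T. R w y}" if "w \<in> W'" for w
  proof -
    have "card {y\<in>Q. R w y} \<le> card ({y\<in>Q - T. R w y} \<union> T)"
      using fin by (intro card_mono) auto
    then have "card {y\<in>Q. R w y} \<le> card {y\<in>Q - T. R w y} + k"
      using card_Un_le[of "{y\<in>Q - T. R w y}" T] T(2) by linarith
    then show ?thesis using partners[of w] that W' by auto
  qed
  have "0 < card {y\<in>Q - T. R w y}"
    using remaining[OF \<open>w \<in> W'\<close>] k_less by linarith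
  then have "Q - T \<noteq> {}"
    by (auto simp: card_gt_0_iff)
  then obtain y where y: "y \<in> Q - T"
    and popular: "card W' * (m - k) \<le> card (Q - T) * card {w\<in>W'. R w y}"
    using exists_popular_partner[OF fin(1,2), where m = "m - k"] remaining by blast
  define W'' where "W'' = {w\<in>W'. R w y}"
  have "card (Q - T) \<le> q"
    using Q card_mono[OF Q(1), of "Q - T"] by auto
  have "m \<le> 2 * (m - k)"
    using Suc.prems by simp
  then have "card W' * m \<le> card W' * (2 * (m - k))"
    by simp
  also have "\<dots> \<le> 2 * (card (Q - T) * card W'')"
    using popular unfolding W''_def by simp
  also have "\<dots> \<le> 2 * q * card W''"
    using \<open>card (Q - T) \<le> q\<close> by simp
  finally have step: "card W' * m \<le> 2 * q * card W''" .
  have "card W * m ^ Suc k = m * (card W * m ^ k)" by simp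
  also have "\<dots> \<le> (card W' * m) * (2 * q) ^ k"
    using bound by simp
  also have "\<dots> \<le> (2 * q * card W'') * (2 * q) ^ k"
    using step by (rule mult_le_mono1)
  also have "\<dots> = card W'' * (2 * q) ^ Suc k"
    by simp
  finally have "card W * m ^ Suc k \<le> card W'' * (2 * q) ^ Suc k" .
  moreover have "card (insert y T) = Suc k"
    using y fin T by simp
  ultimately show ?case
    using y T W' by (intro exI[of _ "insert y T"] exI[of _ W'']) (auto simp: W''_def)
qed

lemma double_le_four_mult_div:
  fixes d r :: nat
  assumes "0 < r" "r \<le> d"
  shows "2 * d \<le> 4 * (r * (d div r))"
proof -
  have "0 < d div r"
    using assms by (simp add: div_greater_zero_iff)
  then have "r \<le> r * (d div r)"
    by simp
  moreover have "d = r * (d div r) + d mod r" "d mod r < r"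
    using assms(1) by simp_all
  ultimately show ?thesis
    by linarith
qed

lemma le_of_power_bounds:
  fixes t r m d w w' :: nat
  assumes "t * (4 * r) ^ t \<le> w" "w * m ^ t \<le> w' * (2 * d) ^ t" "2 * d \<le> 4 * (r * m)"
    and "0 < r" "0 < m"
  shows "t \<le> w'"
proof -
  have "(2 * d) ^ t \<le> (4 * r) ^ t * m ^ t"
    using power_mono[OF assms(3), of t] by (simp add: power_mult_distrib)
  have "t * ((4 * r) ^ t * m ^ t) \<le> w * m ^ t"
    using mult_le_mono1[OF assms(1), of "m ^ t"] by (simp add: mult.assoc)
  also have "\<dots> \<le> w' * (2 * d) ^ t"
    by (fact assms(2))
  also have "\<dots> \<le> w' * ((4 * r) ^ t * m ^ t)"
    using \<open>(2 * d) ^ t \<le> _\<close> by simp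
  finally show ?thesis
    using assms(4,5) by simp
qed

section \<open>Bipartite graphs and induced biclaws\<close>

locale bip_graph =
  fixes X Y :: "'a set" and E :: "'a \<Rightarrow> 'a \<Rightarrow> bool"
  assumes bipartite: "bipartite_graph X Y E"
begin

abbreviation V :: "'a set" where "V \<equiv> X \<union> Y"
abbreviation N :: "'a \<Rightarrow> 'a set" where "N \<equiv> nbhd V E"
abbreviation deg :: "'a \<Rightarrow> nat" where "deg \<equiv> degree V E"

definition missed :: "'a \<Rightarrow> 'a \<Rightarrow> nat" where
  "missed u w = card (N u - N w)"

definition covers :: "nat \<Rightarrow> 'a \<Rightarrow> 'a \<Rightarrow> bool" where
  "covers r u w \<longleftrightarrow> r * missed u w < deg u"

definition non_covering :: "nat \<Rightarrow> 'a \<Rightarrow> 'a \<Rightarrow> 'a set" where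
  "non_covering r u y = {w \<in> N y. w \<noteq> u \<and> \<not> covers r u w}"

lemma finite_V: "finite V"
  using bipartite unfolding bipartite_graph_def by blast

lemma finite_N: "finite (N v)"
  unfolding nbhd_def using finite_V by simp

lemma edge_sym: "E u v \<Longrightarrow> E v u"
  using bipartite unfolding bipartite_graph_def by blast

lemma edge_sides: "E u v \<Longrightarrow> u \<in> X \<and> v \<in> Y \<or> u \<in> Y \<and> v \<in> X"
  using bipartite unfolding bipartite_graph_def by blast

lemma edge_X_iff: "E u v \<Longrightarrow> u \<in> X \<longleftrightarrow> v \<notin> X"
  using bipartite edge_sides unfolding bipartite_graph_def by blast

lemma not_edge_refl: "\<not> E v v"
  using bipartite unfolding bipartite_graph_def by blast

lemma edge_in_V: "E u v \<Longrightarrow> u \<in> V \<and> v \<in> V"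
  using edge_sides by blast

lemma mem_N_iff: "w \<in> N v \<longleftrightarrow> E v w"
  unfolding nbhd_def using edge_in_V by blast

lemma no_edge_in_N: "p \<in> N v \<Longrightarrow> q \<in> N v \<Longrightarrow> \<not> E p q"
  using bipartite unfolding bipartite_graph_def mem_N_iff by blast

lemma min_degree_le: "v \<in> V \<Longrightarrow> min_degree V E \<le> deg v"
  unfolding min_degree_def using finite_V by simp

lemma deg_le_max_degree_on: "u \<in> X \<Longrightarrow> deg u \<le> max_degree_on V E X"
  unfolding max_degree_on_def using finite_V by (simp add: finite_subset)

lemma max_degree_on_attained: "X \<noteq> {} \<Longrightarrow> \<exists>z\<in>X. deg z = max_degree_on V E X"
  unfolding max_degree_on_def using finite_V Max_in[of "deg ` X"] by (fastforce simp: finite_subset)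

lemma deg_eq_common_plus_missed: "deg u = card (N u \<inter> N w) + missed u w"
  unfolding degree_def missed_def using card_Int_Diff[OF finite_N] .

lemma missed_triangle: "missed u w \<le> missed u v + missed v w"
proof -
  have "card (N u - N w) \<le> card ((N u - N v) \<union> (N v - N w))"
    using finite_N by (intro card_mono) auto
  also have "\<dots> \<le> card (N u - N v) + card (N v - N w)"
    by (rule card_Un_le)
  finally show ?thesis unfolding missed_def .
qed

lemma missed_plus_deg_swap: "missed u w + deg w = missed w u + deg u"
  using deg_eq_common_plus_missed[of u w] deg_eq_common_plus_missed[of w u] by (simp add: Int_commute)

lemma finite_non_covering: "finite (non_covering r u y)"
  unfolding non_covering_def using finite_N by simp

lemma non_covering_non_neighbours:
  assumes "w \<in> non_covering r u y" "0 < r"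
  shows "deg u div r \<le> card {q \<in> N u - {y}. \<not> E w q}"
proof -
  have "w \<in> N y" "deg u \<le> r * missed u w"
    using assms(1) unfolding non_covering_def covers_def by auto
  then have "N u - N w \<subseteq> {q \<in> N u - {y}. \<not> E w q}"
    by (auto simp: mem_N_iff dest: edge_sym)
  then have "missed u w \<le> card {q \<in> N u - {y}. \<not> E w q}"
    unfolding missed_def using finite_N by (intro card_mono) auto
  moreover have "deg u div r \<le> missed u w"
    using div_le_mono[OF \<open>deg u \<le> r * missed u w\<close>, of r] assms(2) by simp
  ultimately show ?thesis
    by simp
qed

lemma induced_biclaw_from_edge:
  assumes ab: "E a b"
    and A: "A \<subseteq> N b - {a}" "finite A" "card A = t"
    and B: "B \<subseteq> N a - {b}" "finite B" "card B = t"
    and AB: "\<forall>p\<in>A. \<forall>q\<in>B. \<not> E p q"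
  shows "has_induced_biclaw V E t t"
proof -
  obtain g where g: "bij_betw g {..<t} A"
    using ex_bij_betw_nat_finite[OF A(2)] A(3) atLeast0LessThan by metis
  obtain h where h: "bij_betw h {..<t} B"
    using ex_bij_betw_nat_finite[OF B(2)] B(3) atLeast0LessThan by metis
  define f where "f v = (case v of BX \<Rightarrow> a | BY \<Rightarrow> b | BXi i \<Rightarrow> g i | BYi i \<Rightarrow> h i)" for v
  have gA: "i < t \<Longrightarrow> g i \<in> A" and hB: "i < t \<Longrightarrow> h i \<in> B" for i
    using g h unfolding bij_betw_def by auto
  have g_inj: "inj_on g {..<t}" and h_inj: "inj_on h {..<t}"
    using g h unfolding bij_betw_def by auto
  have gN: "g i \<in> N b" "g i \<noteq> a" and hN: "h i \<in> N a" "h i \<noteq> b" if "i < t" for i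
    using that gA hB A(1) B(1) by auto
  have abN: "a \<in> N b" "b \<in> N a"
    using ab edge_sym by (auto simp: mem_N_iff)
  have Eab: "E a b" "E b a" "\<not> E a a" "\<not> E b b" "a \<noteq> b"
    using ab edge_sym not_edge_refl by metis+
  have on_A: "E b (g i)" "E (g i) b" "\<not> E a (g i)" "\<not> E (g i) a" "g i \<noteq> a" "g i \<noteq> b"
    and on_B: "E a (h i)" "E (h i) a" "\<not> E b (h i)" "\<not> E (h i) b" "h i \<noteq> a" "h i \<noteq> b"
    if "i < t" for i
    using gN[OF that] hN[OF that] abN no_edge_in_N not_edge_refl edge_sym by (metis mem_N_iff)+
  have across: "\<not> E (g i) (g j)" "\<not> E (h i) (h j)" "\<not> E (g i) (h j)" "\<not> E (h j) (g i)"
    "g i \<noteq> h j" "h j \<noteq> g i"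
    if "i < t" "j < t" for i j
    using gN that hN no_edge_in_N AB gA hB on_A on_B edge_sym by metis+
  have f_simps: "f BX = a" "f BY = b" "f (BXi i) = g i" "f (BYi i) = h i" for i
    unfolding f_def by simp_all
  have verts_iff: "BXi i \<in> biclaw_verts t t \<longleftrightarrow> i < t" "BYi i \<in> biclaw_verts t t \<longleftrightarrow> i < t" for i
    unfolding biclaw_verts_def by auto
  have inj: "inj_on f (biclaw_verts t t)"
  proof (rule inj_onI)
    fix u v assume "u \<in> biclaw_verts t t" "v \<in> biclaw_verts t t" "f u = f v"
    then show "u = v"
      using Eab on_A on_B across inj_onD[OF g_inj] inj_onD[OF h_inj]
      by (cases u; cases v) (auto simp: f_simps verts_iff biclaw_verts_def)
  qed
  have "A \<subseteq> V" "B \<subseteq> V" "a \<in> V" "b \<in> V"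
    using A(1) B(1) edge_in_V[OF ab] unfolding nbhd_def by auto
  moreover have "f ` biclaw_verts t t = {a, b} \<union> g ` {..<t} \<union> h ` {..<t}"
    unfolding biclaw_verts_def f_def by (simp add: image_Un image_image)
  ultimately have image: "f ` biclaw_verts t t \<subseteq> V"
    using bij_betw_imp_surj_on[OF g] bij_betw_imp_surj_on[OF h] by auto
  show ?thesis
    unfolding has_induced_biclaw_def
  proof (rule exI[of _ f], intro conjI ballI inj image)
    show "E (f u) (f v) \<longleftrightarrow> biclaw_edge u v"
      if "u \<in> biclaw_verts t t" "v \<in> biclaw_verts t t" for u v
      using that Eab on_A on_B across
      by (cases u; cases v) (simp_all add: f_simps verts_iff)
  qed
qed

end

locale biclaw_free_bip_graph = bip_graph X Y E for X Y :: "'a set" and E +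
  fixes t :: nat
  assumes no_induced_biclaw: "\<not> has_induced_biclaw V E t t"
begin

lemma no_biclaw_configuration:
  assumes ab: "E a b" and A: "A \<subseteq> N b - {a}" "t \<le> card A" and B: "B \<subseteq> N a - {b}" "t \<le> card B"
    and AB: "\<forall>p\<in>A. \<forall>q\<in>B. \<not> E p q"
  shows False
proof -
  obtain A' where A': "A' \<subseteq> A" "card A' = t" "finite A'"
    using obtain_subset_with_card_n[OF A(2)] by blast
  obtain B' where B': "B' \<subseteq> B" "card B' = t" "finite B'"
    using obtain_subset_with_card_n[OF B(2)] by blast
  have "A' \<subseteq> N b - {a}" "B' \<subseteq> N a - {b}" "\<forall>p\<in>A'. \<forall>q\<in>B'. \<not> E p q"
    using A A' B B' AB by blast+
  then have "has_induced_biclaw V E t t"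
    using induced_biclaw_from_edge[OF ab _ A'(3,2) _ B'(3,2)] by blast
  with no_induced_biclaw show False ..
qed

lemma card_non_covering_less:
  assumes uy: "E u y" and "0 < t" "0 < r" and deg: "2 * t * r \<le> deg u"
  shows "card (non_covering r u y) < t * (4 * r) ^ t"
proof (rule ccontr)
  define W where "W = non_covering r u y"
  define Q where "Q = N u - {y}"
  define m where "m = deg u div r"
  assume "\<not> ?thesis"
  then have big: "t * (4 * r) ^ t \<le> card W"
    unfolding W_def by simp
  have "2 * t \<le> m"
    using div_le_mono[OF deg, of r] \<open>0 < r\<close> unfolding m_def by simp
  have W: "finite W" "W \<noteq> {}"
    using big \<open>0 < t\<close> \<open>0 < r\<close> finite_non_covering unfolding W_def by auto
  have Q: "finite Q" "card Q \<le> deg u"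
    unfolding Q_def degree_def using finite_N by (auto simp: card_Diff1_le)
  have partners: "m \<le> card {q\<in>Q. \<not> E w q}" if "w \<in> W" for w
    using non_covering_non_neighbours[of w] that \<open>0 < r\<close> unfolding W_def Q_def m_def by blast
  have "\<exists>T W'. T \<subseteq> Q \<and> card T = t \<and> W' \<subseteq> W \<and> (\<forall>w\<in>W'. \<forall>q\<in>T. \<not> E w q) \<and>
          card W * m ^ t \<le> card W' * (2 * deg u) ^ t"
    by (rule greedy_common_partners[OF W Q partners \<open>2 * t \<le> m\<close>])
  then obtain T W' where T: "T \<subseteq> Q" "card T = t" and W': "W' \<subseteq> W" "\<forall>w\<in>W'. \<forall>q\<in>T. \<not> E w q"
    and bound: "card W * m ^ t \<le> card W' * (2 * deg u) ^ t"
    by blast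
  have "r \<le> 2 * t * r"
    using \<open>0 < t\<close> by simp
  then have "2 * deg u \<le> 4 * (r * m)"
    using double_le_four_mult_div[OF \<open>0 < r\<close>, of "deg u"] deg unfolding m_def by linarith
  then have "t \<le> card W'"
    using le_of_power_bounds[OF big bound _ \<open>0 < r\<close>] \<open>2 * t \<le> m\<close> \<open>0 < t\<close> by simp
  show False
  proof (rule no_biclaw_configuration[OF uy _ \<open>t \<le> card W'\<close> _ _])
    show "W' \<subseteq> N y - {u}" "T \<subseteq> N u - {y}"
      using W' T unfolding W_def Q_def non_covering_def by auto
  qed (use T W' in auto)
qed

end

section \<open>Distance layers from a root\<close>

locale rooted_bip_graph = bip_graph X Y E for X Y :: "'a set" and E +
  fixes z :: 'a
  assumes root_in_X: "z \<in> X" and connected: "connected_graph V E"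
begin

definition level :: "'a \<Rightarrow> nat" where
  "level v = (LEAST k. (E ^^ k) z v)"

definition parents :: "'a \<Rightarrow> 'a set" where
  "parents v = {u \<in> N v. Suc (level u) = level v}"

definition children :: "'a \<Rightarrow> 'a set" where
  "children v = {w \<in> N v. level w = Suc (level v)}"

lemma walk_from_root: "v \<in> V \<Longrightarrow> \<exists>k. (E ^^ k) z v"
proof -
  assume "v \<in> V"
  then have "(\<lambda>a b. a \<in> V \<and> b \<in> V \<and> E a b)\<^sup>*\<^sup>* z v"
    using connected root_in_X unfolding connected_graph_def by blast
  then have "E\<^sup>*\<^sup>* z v"
    using mono_rtranclp[of "\<lambda>a b. a \<in> V \<and> b \<in> V \<and> E a b" E] by blast
  then show ?thesis
    by (simp add: rtranclp_power)
qed

lemma walk_of_length_level: "v \<in> V \<Longrightarrow> (E ^^ level v) z v"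
  unfolding level_def by (rule LeastI_ex) (rule walk_from_root)

lemma level_le: "(E ^^ k) z v \<Longrightarrow> level v \<le> k"
  unfolding level_def by (rule Least_le)

lemma walk_parity: "(E ^^ k) z v \<Longrightarrow> v \<in> X \<longleftrightarrow> even k"
proof (induction k arbitrary: v)
  case 0
  then show ?case using root_in_X by simp
next
  case (Suc k)
  then obtain u where "(E ^^ k) z u" "E u v"
    by (auto elim: relpowp_Suc_E)
  then show ?case
    using Suc.IH[of u] edge_X_iff[of u v] by auto
qed

lemma in_X_iff_even_level: "v \<in> V \<Longrightarrow> v \<in> X \<longleftrightarrow> even (level v)"
  using walk_parity[OF walk_of_length_level] .

lemma level_eq_0_iff: "v \<in> V \<Longrightarrow> level v = 0 \<longleftrightarrow> v = z"
  using walk_of_length_level[of v] level_le[of 0 z] by auto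

lemma root_in_V: "z \<in> V"
  using root_in_X by blast

lemma level_root: "level z = 0"
  using level_eq_0_iff root_in_V by blast

lemma edge_level: "E u w \<Longrightarrow> level w = Suc (level u) \<or> level u = Suc (level w)"
proof -
  assume uw: "E u w"
  then have "u \<in> V" "w \<in> V" "E w u"
    using edge_in_V edge_sym by blast+
  then have "level w \<le> Suc (level u)" "level u \<le> Suc (level w)"
    using uw level_le relpowp_Suc_I[OF walk_of_length_level] by blast+
  moreover have "level u \<noteq> level w"
    using in_X_iff_even_level \<open>u \<in> V\<close> \<open>w \<in> V\<close> edge_X_iff[OF uw] by metis
  ultimately show ?thesis by linarith
qed

lemma root_neighbour_level: "E z w \<Longrightarrow> level w = 1"
  using edge_level[of z w] level_root by auto

lemma common_neighbour_level: "E u p \<Longrightarrow> E w p \<Longrightarrow> level u \<le> level w + 2"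
  using edge_level[of u p] edge_level[of w p] by linarith

lemma exists_parent:
  assumes "v \<in> V" "0 < level v"
  obtains u where "u \<in> parents v"
proof -
  obtain i where i: "level v = Suc i"
    using assms(2) gr0_implies_Suc by blast
  then obtain u where "(E ^^ i) z u" "E u v"
    using walk_of_length_level[OF assms(1)] by (auto elim: relpowp_Suc_E)
  then have "level u = i"
    using level_le edge_level i by fastforce
  then show ?thesis
    using that \<open>E u v\<close> i edge_sym unfolding parents_def by (auto simp: mem_N_iff)
qed

lemma level_one_adj_root:
  assumes "v \<in> V" "level v = 1"
  shows "E z v"
proof -
  obtain u where "E v u" "level u = 0"
    using exists_parent[of v] assms unfolding parents_def by (auto simp: mem_N_iff)
  moreover have "u \<in> V"
    using \<open>E v u\<close> edge_in_V by blast
  ultimately show ?thesis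
    using level_eq_0_iff edge_sym by blast
qed

lemma deg_eq_parents_plus_children: "deg v = card (parents v) + card (children v)"
proof -
  have "N v = parents v \<union> children v" "parents v \<inter> children v = {}"
    unfolding parents_def children_def using edge_level[of v] by (auto simp: mem_N_iff) metis
  then show ?thesis
    unfolding degree_def using finite_N by (metis card_Un_disjoint finite_Un)
qed

lemma finite_parents: "finite (parents v)" and finite_children: "finite (children v)"
  unfolding parents_def children_def using finite_N by simp_all

lemma children_subset: "level v = level y \<Longrightarrow> children v \<subseteq> children y \<union> (N v - N y)"
  unfolding children_def by auto

end

section \<open>Vertices of nearly maximum degree\<close>

locale dense_biclaw_free_graph =
  biclaw_free_bip_graph X Y E t + rooted_bip_graph X Y E z
  for X Y :: "'a set" and E t z +
  fixes r K :: nat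
  assumes r_ge_4: "4 \<le> r" and t_le_K: "t \<le> K"
    and few_non_covering: "E u y \<Longrightarrow> card (non_covering r u y) < K"
    and min_deg: "v \<in> V \<Longrightarrow> 2 * K + 2 * t + 3 \<le> deg v"
    and root_max_deg: "u \<in> X \<Longrightarrow> deg u \<le> deg z"
begin

definition heavy :: "'a \<Rightarrow> bool" where
  "heavy x \<longleftrightarrow> x \<in> X \<and> 2 * deg z + deg x < r * deg x"

lemma covers_missed: "covers r u w \<Longrightarrow> 4 * missed u w < deg u"
  unfolding covers_def using r_ge_4 mult_le_mono1[OF r_ge_4, of "missed u w"] by linarith

lemma covers_if_not_non_covering:
  assumes "u \<in> V" "w \<in> N y" "w \<notin> non_covering r u y"
  shows "covers r u w"
proof (cases "w = u")
  case True
  then show ?thesis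
    using min_deg[OF assms(1)] unfolding covers_def missed_def by simp
qed (use assms in \<open>auto simp: non_covering_def\<close>)

lemma card_parents_less_if_non_covering:
  assumes "E u y" "\<And>w. w \<in> parents y \<Longrightarrow> w \<noteq> u \<and> \<not> covers r u w"
  shows "card (parents y) < K"
proof -
  have "parents y \<subseteq> non_covering r u y"
    using assms(2) unfolding parents_def non_covering_def by auto
  then show ?thesis
    using card_mono[OF finite_non_covering] few_non_covering[OF assms(1)] by (meson le_less_trans)
qed

text \<open>All but fewer than \<open>K\<close> neighbours of \<open>y\<close> cover \<open>u\<close>, and \<open>y\<close> has more than \<open>2 * K + 2\<close>
  neighbours.\<close>
lemma common_cover:
  assumes "E u1 y" "E u2 y"
  obtains c where "E y c" "c \<noteq> u1" "c \<noteq> u2" "covers r u1 c" "covers r u2 c"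
proof -
  let ?bad = "non_covering r u1 y \<union> non_covering r u2 y \<union> {u1, u2}"
  have "card {u1, u2} \<le> 2"
    by (simp add: card_insert_if)
  have "card ?bad \<le> card (non_covering r u1 y) + card (non_covering r u2 y) + card {u1, u2}"
    using card_Un_le[of "non_covering r u1 y" "non_covering r u2 y"]
      card_Un_le[of "non_covering r u1 y \<union> non_covering r u2 y" "{u1, u2}"] by linarith
  also have "\<dots> < deg y"
    using few_non_covering[OF assms(1)] few_non_covering[OF assms(2)] \<open>card {u1, u2} \<le> 2\<close>
      min_deg[of y] edge_in_V[OF assms(1)] by linarith
  finally have "\<not> N y \<subseteq> ?bad"
    unfolding degree_def using card_mono[of ?bad "N y"] finite_non_covering by (meson finite.emptyI
      finite.insertI finite_UnI not_le)
  then obtain c where "c \<in> N y" "c \<notin> ?bad"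
    by blast
  moreover have "u1 \<in> V" "u2 \<in> V"
    using assms edge_in_V by blast+
  ultimately show ?thesis
    using that covers_if_not_non_covering by (auto simp: mem_N_iff)
qed

lemma missed_root_if_common_neighbour:
  assumes "E u y" "E z y"
  shows "r * missed u z < deg u + deg z"
proof -
  obtain c where "E y c" "covers r u c" "covers r z c"
    using common_cover[OF assms] by blast
  have "c \<in> X"
    using \<open>E y c\<close> assms(2) edge_X_iff root_in_X by blast
  have "missed u z \<le> missed u c + missed c z"
    by (rule missed_triangle)
  also have "\<dots> \<le> missed u c + missed z c"
    using missed_plus_deg_swap[of c z] root_max_deg[OF \<open>c \<in> X\<close>] by simp
  finally have "r * missed u z \<le> r * missed u c + r * missed z c"
    by (metis add_mult_distrib2 mult_le_mono2)
  then show ?thesis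
    using \<open>covers r u c\<close> \<open>covers r z c\<close> unfolding covers_def by linarith
qed

lemma no_biclaw_across_levels:
  assumes uw: "E u w" "level w = Suc (level u)"
    and "t \<le> card (parents u)" "t \<le> card (children w)"
  shows False
proof (rule no_biclaw_configuration[OF uw(1)])
  show "children w \<subseteq> N w - {u}" "parents u \<subseteq> N u - {w}"
    using uw unfolding children_def parents_def by auto
  show "\<forall>p\<in>children w. \<forall>q\<in>parents u. \<not> E p q"
    using uw edge_level unfolding children_def parents_def by fastforce
qed (use assms in auto)

lemma few_parents_of_parent:
  assumes "v \<in> V" "card (parents v) < K" "u \<in> parents v"
  shows "card (parents u) < t"
proof -
  have "t \<le> card (children v)"
    using deg_eq_parents_plus_children[of v] min_deg[OF assms(1)] assms(2) by linarith
  moreover have "E u v" "level v = Suc (level u)"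
    using assms(3) edge_sym unfolding parents_def by (auto simp: mem_N_iff)
  ultimately show ?thesis
    using no_biclaw_across_levels by (meson not_le)
qed

lemma parents_at_level_two_if_root_covers:
  assumes "level c = 2" "covers r z c"
  shows "t \<le> card (parents c)"
proof -
  have "N z \<inter> N c \<subseteq> parents c"
    using assms(1) root_neighbour_level unfolding parents_def by (auto simp: mem_N_iff)
  then have "card (N z \<inter> N c) \<le> card (parents c)"
    using finite_parents by (rule card_mono[rotated])
  then show ?thesis
    using deg_eq_common_plus_missed[of z c] covers_missed[OF assms(2)] min_deg[OF root_in_V]
    by linarith
qed

lemma children_if_covers_at_same_level:
  assumes "v \<in> V" "level y = level v" "covers r v y" "card (parents v) < K"
  shows "t \<le> card (children y)"
proof -
  have "card (children v) \<le> card (children y \<union> (N v - N y))"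
    using children_subset[of v y] assms(2) finite_children finite_N by (intro card_mono) auto
  also have "\<dots> \<le> card (children y) + missed v y"
    unfolding missed_def by (rule card_Un_le)
  finally show ?thesis
    using deg_eq_parents_plus_children[of v] covers_missed[OF assms(3)] min_deg[OF assms(1)] assms(4)
    by linarith
qed

lemma covered_child:
  assumes "v \<in> children w" "card (parents w) < t" "covers r w c"
  obtains y where "y \<in> children w" "E c y" "covers r v y"
proof -
  have vw: "E v w" "v \<in> V" "w \<in> V"
    using assms(1) edge_in_V edge_sym unfolding children_def by (auto simp: mem_N_iff)
  define P where "P = children w - (N w - N c) - non_covering r v w"
  have "card (children w) - missed w c \<le> card (children w - (N w - N c))"
    unfolding missed_def using finite_Diff[OF finite_N] by (rule diff_card_le_card_Diff)
  moreover have "card (children w - (N w - N c)) - card (non_covering r v w) \<le> card P"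
    unfolding P_def using finite_non_covering by (rule diff_card_le_card_Diff)
  ultimately have "0 < card P"
    using deg_eq_parents_plus_children[of w] covers_missed[OF assms(3)] few_non_covering[OF vw(1)]
      min_deg[OF vw(3)] assms(2) by linarith
  then obtain y where "y \<in> P"
    by (auto simp: card_gt_0_iff)
  then have "y \<in> children w" "E c y" "covers r v y"
    using covers_if_not_non_covering[OF vw(2)] unfolding P_def children_def
    by (auto simp: mem_N_iff dest: edge_sym)
  then show ?thesis
    using that by blast
qed

lemma many_parents_at_level_three:
  assumes v: "v \<in> V" "level v = 3"
  shows "K \<le> card (parents v)"
proof (rule ccontr)
  assume "\<not> ?thesis"
  then have few: "card (parents v) < K"
    by simp
  obtain w where w: "w \<in> parents v"
    using exists_parent[OF v(1)] v(2) by (metis zero_less_numeral)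
  then have "card (parents w) < t"
    using few_parents_of_parent[OF v(1) few] by blast
  have "level v = Suc (level w)" "v \<in> children w" "w \<in> V"
    using w edge_in_V edge_sym unfolding parents_def children_def by (auto simp: mem_N_iff)
  obtain u where "u \<in> parents w"
    using exists_parent[OF \<open>w \<in> V\<close>] \<open>level v = Suc (level w)\<close> v(2) by (metis zero_less_Suc numeral_3_eq_3 Suc_inject)
  then have "E u w" "E z u"
    using level_one_adj_root \<open>level v = Suc (level w)\<close> v(2) edge_in_V edge_sym
    unfolding parents_def by (auto simp: mem_N_iff)
  then obtain c where c: "E u c" "c \<noteq> z" "covers r z c" "covers r w c"
    using common_cover[OF \<open>E z u\<close> edge_sym[OF \<open>E u w\<close>]] by blast
  have "c \<in> V"
    using c(1) edge_in_V by blast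
  then have "level c = 2"
    using edge_level[OF c(1)] \<open>u \<in> parents w\<close> \<open>level v = Suc (level w)\<close> v(2) level_eq_0_iff c(2)
    unfolding parents_def by auto
  obtain y where y: "y \<in> children w" "E c y" "covers r v y"
    using covered_child[OF \<open>v \<in> children w\<close> \<open>card (parents w) < t\<close> c(4)] .
  have "level y = Suc (level c)"
    using y(1) \<open>level c = 2\<close> \<open>level v = Suc (level w)\<close> v(2) unfolding children_def by simp
  moreover have "t \<le> card (parents c)"
    using parents_at_level_two_if_root_covers \<open>level c = 2\<close> c(3) .
  moreover have "t \<le> card (children y)"
    using children_if_covers_at_same_level[OF v(1) _ y(3) few] y(1) \<open>level v = Suc (level w)\<close>
    unfolding children_def by simp
  ultimately show False
    using no_biclaw_across_levels y(2) by blast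
qed

lemma many_parents_beyond_level_two:
  assumes "v \<in> V" "3 \<le> level v"
  shows "K \<le> card (parents v)"
  using assms
proof (induction "level v" arbitrary: v rule: less_induct)
  case less
  show ?case
  proof (cases "level v = 3")
    case True
    then show ?thesis
      using many_parents_at_level_three less.prems(1) by blast
  next
    case False
    show ?thesis
    proof (rule ccontr)
      assume "\<not> ?thesis"
      then have few: "card (parents v) < K"
        by simp
      obtain u where "u \<in> parents v"
        using exists_parent[OF less.prems(1)] less.prems(2) by (metis not_numeral_le_zero not_gr0)
      then have "card (parents u) < t"
        using few_parents_of_parent[OF less.prems(1) few] by blast
      have u: "level v = Suc (level u)" "u \<in> V"
        using \<open>u \<in> parents v\<close> edge_in_V unfolding parents_def by (auto simp: mem_N_iff)
      have "K \<le> card (parents u)"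
        using less.hyps[of u] u False less.prems(2) by simp
      then show False
        using \<open>card (parents u) < t\<close> t_le_K by linarith
    qed
  qed
qed

lemma exists_covered_parent:
  assumes "E x y" "level x = Suc (level y)" "3 \<le> level y"
  obtains c where "c \<in> parents y" "covers r x c"
proof -
  have "y \<in> V"
    using assms(1) edge_in_V by blast
  have "\<not> (\<forall>w\<in>parents y. w \<noteq> x \<and> \<not> covers r x w)"
    using card_parents_less_if_non_covering[OF assms(1)] many_parents_beyond_level_two[OF \<open>y \<in> V\<close> assms(3)]
    by (meson not_le)
  moreover have "x \<notin> parents y"
    using assms(2) unfolding parents_def by simp
  ultimately show ?thesis
    using that by blast
qed

lemma missed_from_heavy_cover:
  assumes "heavy x" "covers r x c" and disjoint: "N x \<inter> N c \<inter> N w = {}"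
  shows "2 * deg z < r * missed c w"
proof -
  have "card (N x \<inter> N c) \<le> missed c w"
    unfolding missed_def using disjoint finite_N by (intro card_mono) auto
  then have "deg x \<le> missed c w + missed x c"
    using deg_eq_common_plus_missed[of x c] by linarith
  then have "r * deg x \<le> r * missed c w + r * missed x c"
    by (metis add_mult_distrib2 mult_le_mono2)
  then show ?thesis
    using \<open>heavy x\<close> \<open>covers r x c\<close> unfolding heavy_def covers_def by linarith
qed

lemma heavy_not_covers_two_levels_down:
  assumes "heavy x"
    and c: "c \<in> X" "level x = level c + 2" "2 \<le> level c"
  shows "\<not> covers r x c"
proof
  assume "covers r x c"
  obtain y where "y \<in> parents c"
    using exists_parent[of c] c by auto
  then have y: "E c y" "level c = Suc (level y)"
    unfolding parents_def by (auto simp: mem_N_iff)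
  have far: "2 * deg z < r * missed c w" if "w \<in> parents y" for w
  proof (rule missed_from_heavy_cover[OF \<open>heavy x\<close> \<open>covers r x c\<close>])
    have "level w + 4 = level x"
      using that y(2) c(2) unfolding parents_def by simp
    then show "N x \<inter> N c \<inter> N w = {}"
      using common_neighbour_level[of x _ w] by (fastforce simp: mem_N_iff)
  qed
  show False
  proof (cases "level y = 1")
    case True
    have "E z y"
      using level_one_adj_root True y(1) edge_in_V by blast
    then have "z \<in> parents y"
      using True level_root edge_sym unfolding parents_def by (auto simp: mem_N_iff)
    then show False
      using far[of z] missed_root_if_common_neighbour[OF y(1) \<open>E z y\<close>] root_max_deg[OF c(1)] by linarith
  next
    case False
    have "even (level c)"
      using in_X_iff_even_level[of c] c(1) by blast
    then have "odd (level y)"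
      using y(2) by simp
    moreover have "odd n \<Longrightarrow> n \<noteq> 1 \<Longrightarrow> 3 \<le> n" for n :: nat
      by presburger
    ultimately have "K \<le> card (parents y)"
      using many_parents_beyond_level_two[of y] False y(1) edge_in_V by blast
    moreover have "w \<noteq> c \<and> \<not> covers r c w" if "w \<in> parents y" for w
      using far[OF that] root_max_deg[OF c(1)] that y(2) unfolding covers_def parents_def by auto
    then have "card (parents y) < K"
      by (rule card_parents_less_if_non_covering[OF y(1)])
    ultimately show False
      by simp
  qed
qed

lemma heavy_level_le_2:
  assumes "heavy x"
  shows "level x \<le> 2"
proof (rule ccontr)
  have x: "x \<in> X"
    using \<open>heavy x\<close> unfolding heavy_def by blast
  assume "\<not> level x \<le> 2"
  moreover have "even (level x)"
    using in_X_iff_even_level[of x] x by blast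
  moreover have "even n \<Longrightarrow> \<not> n \<le> 2 \<Longrightarrow> 4 \<le> n" for n :: nat
    by presburger
  ultimately have "4 \<le> level x"
    by blast
  obtain y where "y \<in> parents x"
    using exists_parent[of x] x \<open>4 \<le> level x\<close> by auto
  then have y: "E x y" "level x = Suc (level y)"
    unfolding parents_def by (auto simp: mem_N_iff)
  moreover have "3 \<le> level y"
    using y(2) \<open>4 \<le> level x\<close> by simp
  ultimately obtain c where c: "c \<in> parents y" "covers r x c"
    using exists_covered_parent by blast
  then have "E y c" "level x = level c + 2"
    using y(2) unfolding parents_def by (auto simp: mem_N_iff)
  moreover have "c \<in> X"
    using \<open>E x y\<close> \<open>E y c\<close> x edge_X_iff by blast
  ultimately show False
    using heavy_not_covers_two_levels_down[OF \<open>heavy x\<close>] c(2) \<open>4 \<le> level x\<close> by simp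
qed

lemma heavy_near_root:
  assumes "heavy x"
  shows "x = z \<or> (\<exists>y. E x y \<and> E z y)"
proof -
  have x: "x \<in> X"
    using \<open>heavy x\<close> unfolding heavy_def by blast
  then have "level x = 0 \<or> level x = 2"
    using heavy_level_le_2[OF assms] in_X_iff_even_level[of x] by auto
  then show ?thesis
  proof
    assume "level x = 0"
    then show ?thesis using level_eq_0_iff x by blast
  next
    assume "level x = 2"
    then obtain y where "y \<in> parents x"
      using exists_parent[of x] x by auto
    then have "E x y" "level y = 1" "y \<in> V"
      using \<open>level x = 2\<close> edge_in_V unfolding parents_def by (auto simp: mem_N_iff)
    then show ?thesis
      using level_one_adj_root by blast
  qed
qed

lemma heavy_missed_root:
  assumes "heavy x"
  shows "r * missed x z < 2 * deg z"
  using heavy_near_root[OF assms]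
proof
  assume "x = z"
  then show ?thesis
    using min_deg[OF root_in_V] unfolding missed_def by simp
next
  assume "\<exists>y. E x y \<and> E z y"
  then show ?thesis
    using missed_root_if_common_neighbour root_max_deg \<open>heavy x\<close> unfolding heavy_def by fastforce
qed

lemma heavy_common_neighbours:
  assumes "heavy x" "heavy x'"
  shows "r * (deg x + deg x') < r * (card (N x \<inter> N x') + deg z) + 4 * deg z"
proof -
  have "deg x + deg x' \<le> card (N x \<inter> N x') + missed x z + missed z x' + deg x'"
    using deg_eq_common_plus_missed[of x x'] missed_triangle[of x x' z] by linarith
  also have "\<dots> = (card (N x \<inter> N x') + deg z) + (missed x z + missed x' z)"
    using missed_plus_deg_swap[of z x'] by simp
  finally have "r * (deg x + deg x') \<le> r * (card (N x \<inter> N x') + deg z) + (r * missed x z + r * missed x' z)"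
    by (metis add_mult_distrib2 mult_le_mono2)
  then show ?thesis
    using heavy_missed_root[OF assms(1)] heavy_missed_root[OF assms(2)] by linarith
qed

end

context biclaw_free_bip_graph
begin

theorem heavy_vertices_share_neighbours:
  assumes "0 < t" "4 \<le> r" and conn: "connected_graph V E"
    and z: "z \<in> X" "\<And>u. u \<in> X \<Longrightarrow> deg u \<le> deg z"
    and min_deg: "\<And>v. v \<in> V \<Longrightarrow> 2 * t * r + 2 * (t * (4 * r) ^ t) + 2 * t + 3 \<le> deg v"
    and x: "x \<in> X" "2 * deg z + deg x < r * deg x"
    and x': "x' \<in> X" "2 * deg z + deg x' < r * deg x'"
  shows "r * (deg x + deg x') < r * (card (N x \<inter> N x') + deg z) + 4 * deg z"
proof -
  have "t \<le> t * (4 * r) ^ t"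
    using \<open>4 \<le> r\<close> by simp
  moreover have "card (non_covering r u y) < t * (4 * r) ^ t" if "E u y" for u y
  proof (rule card_non_covering_less[OF that \<open>0 < t\<close>])
    show "0 < r" "2 * t * r \<le> deg u"
      using \<open>4 \<le> r\<close> min_deg[of u] edge_in_V[OF that] by auto
  qed
  ultimately interpret dense_biclaw_free_graph X Y E t z r "t * (4 * r) ^ t"
    using \<open>4 \<le> r\<close> z conn min_deg by unfold_locales fastforce+
  show ?thesis
    using heavy_common_neighbours x x' unfolding heavy_def by blast
qed

end

section \<open>Choice of constants\<close>

definition cover_scale :: "real \<Rightarrow> nat" where
  "cover_scale \<epsilon> = nat \<lceil>1 / \<epsilon>\<rceil> + 4"

definition degree_threshold :: "nat \<Rightarrow> real \<Rightarrow> nat" where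
  "degree_threshold t \<epsilon> =
     2 * t * cover_scale \<epsilon> + 2 * (t * (4 * cover_scale \<epsilon>) ^ t) + 2 * t + 3"

lemma cover_scale_bounds: "0 < \<epsilon> \<Longrightarrow> 4 \<le> cover_scale \<epsilon> \<and> 1 \<le> real (cover_scale \<epsilon>) * \<epsilon>"
proof -
  assume "0 < \<epsilon>"
  have "1 / \<epsilon> \<le> real (cover_scale \<epsilon>)"
    unfolding cover_scale_def by linarith
  then have "1 \<le> real (cover_scale \<epsilon>) * \<epsilon>"
    using \<open>0 < \<epsilon>\<close> by (simp add: field_simps)
  then show ?thesis
    unfolding cover_scale_def by simp
qed

lemma heavy_if_degree_close_to_max:
  fixes d D r :: nat and \<epsilon> :: real
  assumes "\<epsilon> < 1/10" "4 \<le> r" "(1 - \<epsilon>) * D < d"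
  shows "2 * D + d < r * d"
proof -
  have "2 \<le> (real r - 1) * (1 - \<epsilon>)"
    using mult_mono[of 3 "real r - 1" "9/10" "1 - \<epsilon>"] assms(1,2) by simp
  from mult_right_mono[OF this, of "real D"]
  have "2 * real D \<le> (real r - 1) * ((1 - \<epsilon>) * D)"
    by (simp add: mult.assoc)
  also have "\<dots> < (real r - 1) * d"
    using assms(2,3) by (intro mult_strict_left_mono) simp_all
  finally have "real (2 * D + d) < real (r * d)"
    by (simp add: algebra_simps)
  then show ?thesis
    by (simp only: of_nat_less_iff)
qed

lemma common_neighbours_if_close_to_max:
  fixes d d' D I r :: nat and \<epsilon> :: real
  assumes "0 < \<epsilon>" "1 \<le> r * \<epsilon>" "(1 - \<epsilon>) * D < d" "(1 - \<epsilon>) * D < d'"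
    and "r * (d + d') < r * (I + D) + 4 * D"
  shows "(1 - 10 * \<epsilon>) * D \<le> I"
proof -
  have "0 < r"
    using assms(1,2) by (cases r) auto
  have "real r * (real d + d' - I - D) < 4 * real D"
    using assms(5) by (simp add: algebra_simps flip: of_nat_add of_nat_mult)
  also have "\<dots> \<le> real r * (4 * \<epsilon> * D)"
    using mult_right_mono[OF assms(2), of "4 * real D"] by (simp add: algebra_simps)
  finally have "real d + d' - I - D < 4 * (\<epsilon> * D)"
    using \<open>0 < r\<close> by (simp add: mult_less_cancel_left)
  moreover have "0 \<le> \<epsilon> * D"
    using assms(1) by simp
  moreover have "real D - \<epsilon> * D < d" "real D - \<epsilon> * D < d'"
    using assms(3,4) by (simp_all add: left_diff_distrib)
  ultimately have "real D - 10 * (\<epsilon> * D) \<le> I"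
    by linarith
  then show ?thesis
    by (simp add: left_diff_distrib)
qed

context biclaw_free_bip_graph
begin

lemma near_max_degree_share_neighbours:
  assumes "0 < t" "0 < \<epsilon>" "\<epsilon> < 1/10" and conn: "connected_graph V E"
    and threshold: "\<And>v. v \<in> V \<Longrightarrow> degree_threshold t \<epsilon> \<le> deg v"
    and x: "x \<in> X" "(1 - \<epsilon>) * max_degree_on V E X < deg x"
    and x': "x' \<in> X" "(1 - \<epsilon>) * max_degree_on V E X < deg x'"
  shows "(1 - 10 * \<epsilon>) * max_degree_on V E X \<le> card (N x \<inter> N x')"
proof -
  define r where "r = cover_scale \<epsilon>"
  obtain z where z: "z \<in> X" "deg z = max_degree_on V E X"
    using max_degree_on_attained x(1) by blast
  have r: "4 \<le> r" "1 \<le> r * \<epsilon>"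
    using cover_scale_bounds \<open>0 < \<epsilon>\<close> unfolding r_def by auto
  have "r * (deg x + deg x') < r * (card (N x \<inter> N x') + deg z) + 4 * deg z"
  proof (rule heavy_vertices_share_neighbours[OF \<open>0 < t\<close> r(1) conn z(1) _ _ x(1) _ x'(1)])
    show "deg u \<le> deg z" if "u \<in> X" for u
      using deg_le_max_degree_on[OF that] z(2) by simp
    show "2 * t * r + 2 * (t * (4 * r) ^ t) + 2 * t + 3 \<le> deg v" if "v \<in> V" for v
      using threshold[OF that] unfolding degree_threshold_def r_def .
    show "2 * deg z + deg x < r * deg x" "2 * deg z + deg x' < r * deg x'"
      using heavy_if_degree_close_to_max[OF \<open>\<epsilon> < 1/10\<close> r(1)] x(2) x'(2) z(2) by auto
  qed
  then show ?thesis
    using common_neighbours_if_close_to_max[OF \<open>0 < \<epsilon>\<close> r(2) x(2) x'(2)] z(2) by simp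
qed

end

theorem mainTheorem13:
  shows "\<exists>C :: nat \<Rightarrow> real \<Rightarrow> real. \<forall>t::nat. \<forall>\<epsilon>::real. \<forall>(X::nat set) (Y::nat set) (E::nat \<Rightarrow> nat \<Rightarrow> bool) (n::nat).
     t > 0 \<longrightarrow> 0 < \<epsilon> \<longrightarrow> \<epsilon> < 1 \<longrightarrow>
     bipartite_graph X Y E \<longrightarrow> card X = n \<longrightarrow> card Y = n \<longrightarrow>
     connected_graph (X \<union> Y) E \<longrightarrow>
     real (min_degree (X \<union> Y) E) \<ge> 3 * C t \<epsilon> \<longrightarrow>
     \<not> has_induced_biclaw (X \<union> Y) E t t \<longrightarrow>
     (\<forall>x \<in> X - U_set (X \<union> Y) E X \<epsilon>. \<forall>x' \<in> X - U_set (X \<union> Y) E X \<epsilon>.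
        real (card (nbhd (X \<union> Y) E x \<inter> nbhd (X \<union> Y) E x'))
          \<ge> (1 - 10 * \<epsilon>) * real (max_degree_on (X \<union> Y) E X))"
proof (rule exI[of _ "\<lambda>t \<epsilon>. real (degree_threshold t \<epsilon>)"], intro allI impI ballI)
  fix t :: nat and \<epsilon> :: real and X Y :: "nat set" and E :: "nat \<Rightarrow> nat \<Rightarrow> bool" and n :: nat and x x'
  assume "0 < t" "0 < \<epsilon>" and bip: "bipartite_graph X Y E" and conn: "connected_graph (X \<union> Y) E"
    and min_deg: "3 * real (degree_threshold t \<epsilon>) \<le> real (min_degree (X \<union> Y) E)"
    and free: "\<not> has_induced_biclaw (X \<union> Y) E t t"
    and x: "x \<in> X - U_set (X \<union> Y) E X \<epsilon>" and x': "x' \<in> X - U_set (X \<union> Y) E X \<epsilon>"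
  interpret biclaw_free_bip_graph X Y E t
    using bip free by unfold_locales
  show "(1 - 10 * \<epsilon>) * real (max_degree_on V E X) \<le> real (card (N x \<inter> N x'))"
  proof (cases "\<epsilon> < 1/10")
    case True
    have "degree_threshold t \<epsilon> \<le> min_degree V E"
      using min_deg by (simp flip: of_nat_le_iff)
    then have "degree_threshold t \<epsilon> \<le> deg v" if "v \<in> V" for v
      using min_degree_le[OF that] by linarith
    then show ?thesis
      using near_max_degree_share_neighbours[OF \<open>0 < t\<close> \<open>0 < \<epsilon>\<close> True conn] x x'
      unfolding U_set_def by auto
  next
    case False
    then have "(1 - 10 * \<epsilon>) * real (max_degree_on V E X) \<le> 0"
      by (intro mult_nonpos_nonneg) simp_all
    then show ?thesis
      by (meson of_nat_0_le_iff order_trans)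
  qed
qed

end
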